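(* Let $\zeta(t)$ be the KMP process with boundary temperatures $T_{\partial\mathbb V}$ described in the context. (1) If the law of $\zeta(0)$ belongs to $\mathcal M$ with parameter measure $\nu$ (supported on $\{s: s_j=T_j\ \forall j\in\partial\mathbb V\}$), then for every $t\ge0$ the law $\mu^\zeta_t$ of $\zeta(t)$ belongs to $\mathcal M$ with parameter measure $\nu_t:=\nu e^{tL^O}$, the law at time $t$ of the opinion process started from $\nu$. (2) The invariant measure of the KMP process with boundary temperatures $T_{\partial\mathbb V}$ is the element of $\mathcal M$ with parameter measure $\nu^O$: $\mu^\zeta(d\underline\zeta)=\int\nu^O(d\underline s)\prod_{i\in\overline{\mathbb V}}\frac1{s_i}e^{-\zeta_i/s_i}d\zeta_i$. (3) For all $t\ge0$ and all $k_i\in\{0,1,2,\dots\}$, $\int\mu^\zeta_t(d\underline\zeta)\prod_{i\in\overline{\mathbb V}}\zeta_i^{k_i}=\int\nu_t(d\underline s)\prod_{i\in\overline{\mathbb V}}k_i!\,s_i^{k_i}$, and $\int\mu^\zeta(d\underline\zeta)\prod_{i\in\overline{\mathbb V}}\zeta_i^{k_i}=\int\nu^O(d\underline s)\prod_{i\in\overline{\mathbb V}}k_i!\,s_i^{k_i}$.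
   Context: Graph: $(\overline{\mathbb V},\overline E)$ is a finite oriented graph; $\overline{\mathbb V}=\mathbb V\cup\partial\mathbb V$ (disjoint; internal and boundary vertices). There is at most one edge between any pair of vertices and if $ij\in\overline E$ then $ji\notin\overline E$. $E$ is the set of edges with both endpoints in $\mathbb V$, $\partial E$ the set of edges with one endpoint in $\partial\mathbb V$; there are no edges between two boundary vertices, and every boundary edge is written $ij$ with $i\in\mathbb V$, $j\in\partial\mathbb V$. $\overline E=E\cup\partial E$. Each $j\in\partial\mathbb V$ carries a fixed temperature $T_j>0$. KMP process with boundary temperatures $T_{\partial\mathbb V}$: Markov process on $\mathbb R_+^{\overline{\mathbb V}}$ with generator $L^\zeta f(\zeta)=\sum_{ij\in E}\int_0^1du\,[f(H^\zeta_{ij;u}\zeta)-f(\zeta)]+\sum_{ij\in\partial E}\int_0^1du\int_0^\infty db\,e^{-b}[f(H^\zeta_{ij;u,b}\zeta)-f(\zeta)]$, where $(H^\zeta_{ij;u}\zeta)_i=u(\zeta_i+\zeta_j)$, $(H^\zeta_{ij;u}\zeta)_j=(1-u)(\zeta_i+\zeta_j)$, $(H^\zeta_{ij;u,b}\zeta)_i=u(\zeta_i+\zeta_j)$, $(H^\zeta_{ij;u,b}\zeta)_j=bT_j$, all other coordinates unchanged. Opinion process $O$ with boundary conditions $T_{\partial\mathbb V}$: Markov process on $\mathbb R_+^{\overline{\mathbb V}}$ with $O_j\equiv T_j$ for $j\in\partial\mathbb V$ and generator $L^Of(O)=\sum_{ij\in\overline E}\int_0^1dv\,[f(H^O_{ij;v}O)-f(O)]$,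 where $(H^O_{ij;v}O)_\ell=vO_i+(1-v)O_j$ for $\ell\in\{i,j\}\cap\mathbb V$ and $(H^O_{ij;v}O)_\ell=O_\ell$ otherwise. The paper asserts that this process has a unique invariant probability measure, denoted $\nu^O$. $\mathcal M$: the set of probability measures $\mu$ on $\mathbb R_+^{\overline{\mathbb V}}$ of the form $\mu(d\underline\zeta)=\int\nu(d\underline s)\prod_{i\in\overline{\mathbb V}}\frac1{s_i}e^{-\zeta_i/s_i}d\zeta_i$ for some probability measure $\nu$ on $\mathbb R_+^{\overline{\mathbb V}}$, called the parameter measure of $\mu$ (mixtures of products of independent exponentials with means $s_i$). *)

theory Defs
  imports "HOL-Probability.Probability"
begin

text \<open>V = internal vertices, B = boundary vertices, the full
vertex set is V \<union> B, Eb = set of oriented edges (pairs). Configurations are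
extensional functions on V \<union> B (the measurable space stsp (V \<union> B)).\<close>

definition stsp :: "'v set \<Rightarrow> ('v \<Rightarrow> real) measure" where
  "stsp W = PiM W (\<lambda>_. borel)"

definition unif01 :: "real measure" where
  "unif01 = uniform_measure lborel {0..1}"

definition exp1 :: "real measure" where
  "exp1 = density lborel (\<lambda>b. ennreal (exponential_density 1 b))"

text \<open>Exponential law with mean s (density (1/s) e^{-x/s}); degenerate convention: mean 0 gives the Dirac mass at 0.\<close>
definition exp_mean :: "real \<Rightarrow> real measure" where
  "exp_mean s = (if s \<le> 0 then return borel 0
                 else density lborel (\<lambda>x. ennreal (exponential_density (1 / s) x)))"

definition exp_mixture :: "'v set \<Rightarrow> ('v \<Rightarrow> real) measure \<Rightarrow> ('v \<Rightarrow> real) measure" where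
  "exp_mixture W \<nu> = \<nu> \<bind> (\<lambda>s. PiM W (\<lambda>i. exp_mean (s i)))"

definition kmp_edge_step ::
  "'v set \<Rightarrow> 'v set \<Rightarrow> ('v \<Rightarrow> real) \<Rightarrow> 'v \<Rightarrow> 'v \<Rightarrow> ('v \<Rightarrow> real) measure \<Rightarrow> ('v \<Rightarrow> real) measure" where
  "kmp_edge_step V B T i j \<mu> =
     (if j \<in> B then
        distr ((\<mu> \<Otimes>\<^sub>M unif01) \<Otimes>\<^sub>M exp1) (stsp (V \<union> B))
          (\<lambda>((\<zeta>, u), b). \<zeta>(i := u * (\<zeta> i + \<zeta> j), j := b * T j))
      else
        distr (\<mu> \<Otimes>\<^sub>M unif01) (stsp (V \<union> B))
          (\<lambda>(\<zeta>, u). \<zeta>(i := u * (\<zeta> i + \<zeta> j), j := (1 - u) * (\<zeta> i + \<zeta> j))))"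

definition op_edge_step ::
  "'v set \<Rightarrow> 'v set \<Rightarrow> 'v \<Rightarrow> 'v \<Rightarrow> ('v \<Rightarrow> real) measure \<Rightarrow> ('v \<Rightarrow> real) measure" where
  "op_edge_step V B i j \<mu> =
     distr (\<mu> \<Otimes>\<^sub>M unif01) (stsp (V \<union> B))
       (\<lambda>(x, v). (\<lambda>l. if l \<in> {i, j} \<inter> V then v * x i + (1 - v) * x j else x l))"

text \<open>Uniformly averaged jump kernel (the generator is card Eb times (K - Id)).\<close>
definition kmp_step ::
  "'v set \<Rightarrow> 'v set \<Rightarrow> ('v \<times> 'v) set \<Rightarrow> ('v \<Rightarrow> real) \<Rightarrow> ('v \<Rightarrow> real) measure \<Rightarrow> ('v \<Rightarrow> real) measure" where
  "kmp_step V B Eb T \<mu> = measure_pmf (pmf_of_set Eb) \<bind> (\<lambda>(i, j). kmp_edge_step V B T i j \<mu>)"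

definition op_step ::
  "'v set \<Rightarrow> 'v set \<Rightarrow> ('v \<times> 'v) set \<Rightarrow> ('v \<Rightarrow> real) measure \<Rightarrow> ('v \<Rightarrow> real) measure" where
  "op_step V B Eb \<mu> = measure_pmf (pmf_of_set Eb) \<bind> (\<lambda>(i, j). op_edge_step V B i j \<mu>)"

text \<open>Semigroup of the pure jump process with bounded generator r (K - Id), acting on
laws: mu e^{tL} = sum_n Poisson(r t)(n) mu K^n (uniformization).\<close>
definition unif_sg :: "real \<Rightarrow> ('a measure \<Rightarrow> 'a measure) \<Rightarrow> real \<Rightarrow> 'a measure \<Rightarrow> 'a measure" where
  "unif_sg r K t \<mu> = (if r * t \<le> 0 then \<mu>
      else measure_pmf (poisson_pmf (r * t)) \<bind> (\<lambda>n. (K ^^ n) \<mu>))"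

definition kmp_law ::
  "'v set \<Rightarrow> 'v set \<Rightarrow> ('v \<times> 'v) set \<Rightarrow> ('v \<Rightarrow> real) \<Rightarrow> real \<Rightarrow> ('v \<Rightarrow> real) measure \<Rightarrow> ('v \<Rightarrow> real) measure" where
  "kmp_law V B Eb T t \<mu> = unif_sg (real (card Eb)) (kmp_step V B Eb T) t \<mu>"

definition op_law ::
  "'v set \<Rightarrow> 'v set \<Rightarrow> ('v \<times> 'v) set \<Rightarrow> real \<Rightarrow> ('v \<Rightarrow> real) measure \<Rightarrow> ('v \<Rightarrow> real) measure" where
  "op_law V B Eb t \<mu> = unif_sg (real (card Eb)) (op_step V B Eb) t \<mu>"

definition admissible_param ::
  "'v set \<Rightarrow> 'v set \<Rightarrow> ('v \<Rightarrow> real) \<Rightarrow> ('v \<Rightarrow> real) measure \<Rightarrow> bool" where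
  "admissible_param V B T \<nu> \<longleftrightarrow> prob_space \<nu> \<and> sets \<nu> = sets (stsp (V \<union> B)) \<and>
     (AE s in \<nu>. (\<forall>i\<in>V. 0 \<le> s i) \<and> (\<forall>j\<in>B. s j = T j))"

end

theory Submission
  imports Defs
begin

(* Let X, Y be independent standard exponentials, U, V, W uniform on [0, 1] and G a Gamma(2, 1)
   variable (law erlang2), all independent.  In polar coordinates, (X + Y, X / (X + Y)) has the
   law of (G, W), so (X, Y) has the law of (G W, G (1 - W)).  Hence, for a, b >= 0 and
   m(w) = w a + (1 - w) b, both (U (a X + b Y), (1 - U) (a X + b Y)) and (m(V) X, m(V) Y) have the
   law of (G U m(W), G (1 - U) m(W)).  The left pair is a KMP exchange between independent
   exponentials with means a and b; the right pair is a product of exponentials whose means have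
   undergone an opinion update.  At a boundary edge the fresh energy b T_j is exponential with
   mean T_j, the frozen opinion there.  So one KMP update along an edge turns the mixture with
   parameter law nu into the mixture with parameter law "nu after one opinion update"; averaging
   over edges and over the Poisson number of jumps gives (1).  (2) is (1) applied to the invariant
   law nu^O, and (3) follows from the exponential moments  int x^k Exp(s)(dx) = k! s^k. *)

section \<open>Exponential, uniform and Erlang laws\<close>

lemma sets_exp1[simp, measurable_cong]: "sets exp1 = sets borel"
  by (simp add: exp1_def)

lemma sets_unif01[simp, measurable_cong]: "sets unif01 = sets borel"
  by (simp add: unif01_def)

lemma space_exp1[simp]: "space exp1 = UNIV"
  by (simp add: exp1_def)

interpretation exp1: prob_space exp1
proof -
  have "prob_space (density lborel (exponential_density 1))"
    by (rule prob_space_exponential_density) simp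
  then show "prob_space exp1"
    by (simp add: exp1_def)
qed

interpretation unif01: prob_space unif01
  unfolding unif01_def by (rule prob_space_uniform_measure) auto

lemma AE_unif01: "AE w in unif01. 0 \<le> w \<and> w \<le> 1"
  unfolding unif01_def by (rule AE_uniform_measureI) auto

lemma AE_exp1_nonneg: "AE x in exp1. 0 \<le> x"
  unfolding exp1_def by (subst AE_density) (auto simp: exponential_density_def)

lemma nn_integral_exp1:
  assumes [measurable]: "f \<in> borel_measurable borel"
  shows "(\<integral>\<^sup>+x. f x \<partial>exp1) = (\<integral>\<^sup>+x. ennreal (exp (-x)) * indicator {0..} x * f x \<partial>lborel)"
  unfolding exp1_def
  by (subst nn_integral_density)
     (auto intro!: nn_integral_cong simp: exponential_density_def split: split_indicator)

lemma nn_integral_unif01: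
  assumes [measurable]: "f \<in> borel_measurable borel"
  shows "(\<integral>\<^sup>+x. f x \<partial>unif01) = (\<integral>\<^sup>+x. indicator {0..1} x * f x \<partial>lborel)"
  unfolding unif01_def
  by (subst nn_integral_uniform_measure) (auto simp: mult.commute divide_ennreal_def)

definition erlang2 :: "real measure" where
  "erlang2 = density lborel (erlang_density 1 1)"

lemma nn_integral_erlang2:
  assumes [measurable]: "f \<in> borel_measurable borel"
  shows "(\<integral>\<^sup>+g. f g \<partial>erlang2) = (\<integral>\<^sup>+g. ennreal (g * exp (-g)) * indicator {0..} g * f g \<partial>lborel)"
  unfolding erlang2_def
  by (subst nn_integral_density)
     (auto intro!: nn_integral_cong simp: erlang_density_def split: split_indicator)

lemma measurable_app2:
  fixes k :: "'a \<Rightarrow> 'b \<Rightarrow> ennreal"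
  assumes "case_prod k \<in> borel_measurable (N \<Otimes>\<^sub>M L)" "f \<in> measurable M N" "g \<in> measurable M L"
  shows "(\<lambda>x. k (f x) (g x)) \<in> borel_measurable M"
  using measurable_compose[OF measurable_Pair[OF assms(2,3)] assms(1)] by simp

lemma measure_eqI_nn_integral:
  assumes "sets M = sets N"
    and "\<And>f. f \<in> borel_measurable N \<Longrightarrow> (\<integral>\<^sup>+x. f x \<partial>M) = (\<integral>\<^sup>+x. f x \<partial>N)"
  shows "M = N"
proof (rule measure_eqI[OF assms(1)])
  fix A assume "A \<in> sets M"
  with assms show "emeasure M A = emeasure N A"
    by (metis borel_measurable_indicator nn_integral_indicator)
qed

section \<open>Polar coordinates for two exponentials\<close>

lemma nn_integral_quadrant_polar:
  fixes F :: "real \<Rightarrow> real \<Rightarrow> ennreal"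
  assumes F: "case_prod F \<in> borel_measurable (borel \<Otimes>\<^sub>M borel)"
  shows "(\<integral>\<^sup>+x. \<integral>\<^sup>+y. indicator {0..} x * indicator {0..} y * F x y \<partial>lborel \<partial>lborel)
       = (\<integral>\<^sup>+g. ennreal g * indicator {0..} g *
            (\<integral>\<^sup>+w. indicator {0..1} w * F (g * w) (g * (1 - w)) \<partial>lborel) \<partial>lborel)"
proof -
  note [measurable] = measurable_app2[OF F]
  have "(\<integral>\<^sup>+x. \<integral>\<^sup>+y. indicator {0..} x * indicator {0..} y * F x y \<partial>lborel \<partial>lborel)
      = (\<integral>\<^sup>+x. \<integral>\<^sup>+g. indicator {0..} x * indicator {0..} (g - x) * F x (g - x) \<partial>lborel \<partial>lborel)"
  proof (rule nn_integral_cong)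
    fix x :: real
    show "(\<integral>\<^sup>+y. indicator {0..} x * indicator {0..} y * F x y \<partial>lborel)
        = (\<integral>\<^sup>+g. indicator {0..} x * indicator {0..} (g - x) * F x (g - x) \<partial>lborel)"
      by (subst nn_integral_real_affine[where c=1 and t="-x"]) auto
  qed
  also have "\<dots> = (\<integral>\<^sup>+g. \<integral>\<^sup>+x. indicator {0..} x * indicator {0..} (g - x) * F x (g - x) \<partial>lborel \<partial>lborel)"
    by (rule lborel_pair.Fubini') measurable
  also have "\<dots> = (\<integral>\<^sup>+g. ennreal g * indicator {0..} g *
            (\<integral>\<^sup>+w. indicator {0..1} w * F (g * w) (g * (1 - w)) \<partial>lborel) \<partial>lborel)"
  proof (rule nn_integral_cong_AE)
    show "AE g in lborel. (\<integral>\<^sup>+x. indicator {0..} x * indicator {0..} (g - x) * F x (g - x) \<partial>lborel)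
        = ennreal g * indicator {0..} g * (\<integral>\<^sup>+w. indicator {0..1} w * F (g * w) (g * (1 - w)) \<partial>lborel)"
      using AE_lborel_singleton[of 0]
    proof eventually_elim
      case (elim g)
      show ?case
      proof (cases "0 < g")
        case True
        have "(\<integral>\<^sup>+x. indicator {0..} x * indicator {0..} (g - x) * F x (g - x) \<partial>lborel)
            = ennreal g * (\<integral>\<^sup>+w. indicator {0..} (g * w) * indicator {0..} (g - g * w) * F (g * w) (g - g * w) \<partial>lborel)"
          using True by (subst nn_integral_real_affine[where c=g and t=0]) auto
        also have "\<dots> = ennreal g * (\<integral>\<^sup>+w. indicator {0..1} w * F (g * w) (g * (1 - w)) \<partial>lborel)"
          using True
          by (intro arg_cong2[where f="(*)"] nn_integral_cong refl)
             (auto simp: zero_le_mult_iff right_diff_distrib split: split_indicator)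
        finally show ?thesis
          using True by simp
      next
        case False
        with elim have "g < 0" by simp
        then show ?thesis
          by (auto intro!: nn_integral_zero' split: split_indicator)
      qed
    qed
  qed
  finally show ?thesis .
qed

lemma nn_integral_exp1_pair_polar:
  fixes K :: "real \<Rightarrow> real \<Rightarrow> ennreal"
  assumes K: "case_prod K \<in> borel_measurable (borel \<Otimes>\<^sub>M borel)"
  shows "(\<integral>\<^sup>+x. \<integral>\<^sup>+y. K x y \<partial>exp1 \<partial>exp1) = (\<integral>\<^sup>+g. \<integral>\<^sup>+w. K (g * w) (g * (1 - w)) \<partial>unif01 \<partial>erlang2)"
proof -
  note [measurable] = measurable_app2[OF K]
  define F where "F x y = ennreal (exp (-x)) * ennreal (exp (-y)) * K x y" for x y
  have [measurable]: "case_prod F \<in> borel_measurable (borel \<Otimes>\<^sub>M borel)"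
    unfolding F_def by measurable
  have "(\<integral>\<^sup>+x. \<integral>\<^sup>+y. K x y \<partial>exp1 \<partial>exp1)
      = (\<integral>\<^sup>+x. \<integral>\<^sup>+y. indicator {0..} x * indicator {0..} y * F x y \<partial>lborel \<partial>lborel)"
    by (simp add: nn_integral_exp1 F_def nn_integral_cmult[symmetric] mult_ac)
  also have "\<dots> = (\<integral>\<^sup>+g. ennreal g * indicator {0..} g *
            (\<integral>\<^sup>+w. indicator {0..1} w * F (g * w) (g * (1 - w)) \<partial>lborel) \<partial>lborel)"
    by (rule nn_integral_quadrant_polar) measurable
  also have "\<dots> = (\<integral>\<^sup>+g. ennreal (g * exp (-g)) * indicator {0..} g *
            (\<integral>\<^sup>+w. indicator {0..1} w * K (g * w) (g * (1 - w)) \<partial>lborel) \<partial>lborel)"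
  proof (intro nn_integral_cong)
    fix g :: real
    have "ennreal (exp (- (g * w))) * ennreal (exp (- (g * (1 - w)))) = ennreal (exp (-g))" for w
      by (simp flip: ennreal_mult exp_add add: algebra_simps)
    then have "(\<integral>\<^sup>+w. indicator {0..1} w * F (g * w) (g * (1 - w)) \<partial>lborel)
        = ennreal (exp (-g)) * (\<integral>\<^sup>+w. indicator {0..1} w * K (g * w) (g * (1 - w)) \<partial>lborel)"
      by (simp add: F_def nn_integral_cmult[symmetric] mult_ac)
    then show "ennreal g * indicator {0..} g * (\<integral>\<^sup>+w. indicator {0..1} w * F (g * w) (g * (1 - w)) \<partial>lborel)
        = ennreal (g * exp (-g)) * indicator {0..} g *
            (\<integral>\<^sup>+w. indicator {0..1} w * K (g * w) (g * (1 - w)) \<partial>lborel)"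
      by (cases "0 \<le> g") (simp_all add: ennreal_mult mult_ac)
  qed
  also have "\<dots> = (\<integral>\<^sup>+g. \<integral>\<^sup>+w. K (g * w) (g * (1 - w)) \<partial>unif01 \<partial>erlang2)"
    by (simp add: nn_integral_erlang2 nn_integral_unif01)
  finally show ?thesis .
qed

definition pos_part :: "real \<Rightarrow> real" where
  "pos_part x = max x 0"

lemma pos_part_eq[simp]: "0 \<le> x \<Longrightarrow> pos_part x = x"
  by (simp add: pos_part_def)

lemma borel_measurable_pos_part[measurable]: "pos_part \<in> borel_measurable borel"
  unfolding pos_part_def by measurable

lemma kmp_bulk_update_exp1:
  fixes h :: "real \<Rightarrow> real \<Rightarrow> ennreal"
  assumes h: "case_prod h \<in> borel_measurable (borel \<Otimes>\<^sub>M borel)" and "0 \<le> a" "0 \<le> b"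
  shows "(\<integral>\<^sup>+x. \<integral>\<^sup>+y. \<integral>\<^sup>+u. h (u * (a * x + b * y)) ((1 - u) * (a * x + b * y)) \<partial>unif01 \<partial>exp1 \<partial>exp1)
       = (\<integral>\<^sup>+x. \<integral>\<^sup>+y. \<integral>\<^sup>+v. h (pos_part (v * a + (1 - v) * b) * x) (pos_part (v * a + (1 - v) * b) * y)
            \<partial>unif01 \<partial>exp1 \<partial>exp1)"
proof -
  note [measurable] = measurable_app2[OF h]
  define m where "m v = v * a + (1 - v) * b" for v
  have [measurable]: "m \<in> borel_measurable borel"
    unfolding m_def by measurable
  have "(\<integral>\<^sup>+x. \<integral>\<^sup>+y. \<integral>\<^sup>+u. h (u * (a * x + b * y)) ((1 - u) * (a * x + b * y)) \<partial>unif01 \<partial>exp1 \<partial>exp1)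
      = (\<integral>\<^sup>+g. \<integral>\<^sup>+w. \<integral>\<^sup>+u. h (u * (g * m w)) ((1 - u) * (g * m w)) \<partial>unif01 \<partial>unif01 \<partial>erlang2)"
    by (subst nn_integral_exp1_pair_polar) (simp_all add: m_def algebra_simps)
  also have "\<dots> = (\<integral>\<^sup>+g. \<integral>\<^sup>+u. \<integral>\<^sup>+w. h (u * (g * m w)) ((1 - u) * (g * m w)) \<partial>unif01 \<partial>unif01 \<partial>erlang2)"
  proof (rule nn_integral_cong)
    interpret pair_prob_space unif01 unif01 ..
    show "(\<integral>\<^sup>+w. \<integral>\<^sup>+u. h (u * (g * m w)) ((1 - u) * (g * m w)) \<partial>unif01 \<partial>unif01)
        = (\<integral>\<^sup>+u. \<integral>\<^sup>+w. h (u * (g * m w)) ((1 - u) * (g * m w)) \<partial>unif01 \<partial>unif01)" for g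
      by (rule Fubini') measurable
  qed
  also have "\<dots> = (\<integral>\<^sup>+g. \<integral>\<^sup>+u. \<integral>\<^sup>+w. h (pos_part (m w) * (g * u)) (pos_part (m w) * (g * (1 - u)))
      \<partial>unif01 \<partial>unif01 \<partial>erlang2)"
  proof (rule nn_integral_cong, rule nn_integral_cong, rule nn_integral_cong_AE)
    show "AE w in unif01. h (u * (g * m w)) ((1 - u) * (g * m w))
        = h (pos_part (m w) * (g * u)) (pos_part (m w) * (g * (1 - u)))" for g u
      using AE_unif01 by eventually_elim (use assms in \<open>simp add: m_def ac_simps\<close>)
  qed
  also have "\<dots> = (\<integral>\<^sup>+x. \<integral>\<^sup>+y. \<integral>\<^sup>+v. h (pos_part (m v) * x) (pos_part (m v) * y) \<partial>unif01 \<partial>exp1 \<partial>exp1)"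
    by (rule nn_integral_exp1_pair_polar[symmetric]) measurable
  finally show ?thesis
    by (simp add: m_def)
qed

lemma kmp_boundary_update_exp1:
  fixes h :: "real \<Rightarrow> real \<Rightarrow> ennreal"
  assumes h: "case_prod h \<in> borel_measurable (borel \<Otimes>\<^sub>M borel)" and "0 \<le> a" "0 < c"
  shows "(\<integral>\<^sup>+x. \<integral>\<^sup>+y. \<integral>\<^sup>+u. \<integral>\<^sup>+b. h (u * (a * x + c * y)) (b * c) \<partial>exp1 \<partial>unif01 \<partial>exp1 \<partial>exp1)
       = (\<integral>\<^sup>+x. \<integral>\<^sup>+y. \<integral>\<^sup>+v. h (pos_part (v * a + (1 - v) * c) * x) (c * y) \<partial>unif01 \<partial>exp1 \<partial>exp1)"
proof -
  note [measurable] = measurable_app2[OF h]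
  define m where "m v = pos_part (v * a + (1 - v) * c)" for v
  have [measurable]: "m \<in> borel_measurable borel"
    unfolding m_def by measurable
  (* h' ignores its second argument: the bulk identity applies to it, after which y integrates out. *)
  define h' where "h' p q = (\<integral>\<^sup>+b. h p (b * c) \<partial>exp1)" for p q :: real
  have [measurable]: "case_prod h' \<in> borel_measurable (borel \<Otimes>\<^sub>M borel)"
    unfolding h'_def by measurable
  have "(\<integral>\<^sup>+x. \<integral>\<^sup>+y. \<integral>\<^sup>+u. \<integral>\<^sup>+b. h (u * (a * x + c * y)) (b * c) \<partial>exp1 \<partial>unif01 \<partial>exp1 \<partial>exp1)
      = (\<integral>\<^sup>+x. \<integral>\<^sup>+y. \<integral>\<^sup>+u. h' (u * (a * x + c * y)) ((1 - u) * (a * x + c * y)) \<partial>unif01 \<partial>exp1 \<partial>exp1)"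
    by (simp add: h'_def)
  also have "\<dots> = (\<integral>\<^sup>+x. \<integral>\<^sup>+y. \<integral>\<^sup>+v. h' (m v * x) (m v * y) \<partial>unif01 \<partial>exp1 \<partial>exp1)"
    unfolding m_def using assms by (intro kmp_bulk_update_exp1) auto
  also have "\<dots> = (\<integral>\<^sup>+x. \<integral>\<^sup>+v. \<integral>\<^sup>+y. h (m v * x) (c * y) \<partial>exp1 \<partial>unif01 \<partial>exp1)"
    using exp1.emeasure_space_1 by (simp add: h'_def mult.commute)
  also have "\<dots> = (\<integral>\<^sup>+x. \<integral>\<^sup>+y. \<integral>\<^sup>+v. h (m v * x) (c * y) \<partial>unif01 \<partial>exp1 \<partial>exp1)"
  proof (rule nn_integral_cong)
    interpret pair_prob_space exp1 unif01 ..
    show "(\<integral>\<^sup>+v. \<integral>\<^sup>+y. h (m v * x) (c * y) \<partial>exp1 \<partial>unif01) = (\<integral>\<^sup>+y. \<integral>\<^sup>+v. h (m v * x) (c * y) \<partial>unif01 \<partial>exp1)" for x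
      by (rule Fubini') measurable
  qed
  finally show ?thesis
    by (simp add: m_def)
qed

section \<open>Mixtures of products of exponentials\<close>

(* The positive part makes this hold for every c, since exp_mean c is the Dirac mass at 0 for c <= 0. *)
lemma exp_mean_eq_distr_exp1: "exp_mean c = distr exp1 borel (\<lambda>x. pos_part c * x)"
proof (cases "c \<le> 0")
  case True
  then show ?thesis
    using exp1.distr_const[of 0 borel] by (simp add: exp_mean_def pos_part_def)
next
  case False
  then have c: "0 < c" by simp
  show ?thesis
  proof (rule measure_eqI_nn_integral[symmetric])
    fix f :: "real \<Rightarrow> ennreal" assume "f \<in> borel_measurable (exp_mean c)"
    then have f[measurable]: "f \<in> borel_measurable borel"
      using c by (simp add: exp_mean_def)
    have "(\<integral>\<^sup>+x. f x \<partial>distr exp1 borel (\<lambda>x. pos_part c * x))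
        = (\<integral>\<^sup>+x. ennreal (exp (-x)) * indicator {0..} x * f (c * x) \<partial>lborel)"
      using c by (simp add: nn_integral_distr nn_integral_exp1)
    also have "\<dots> = ennreal (1 / c) * (\<integral>\<^sup>+y. ennreal (exp (- (y / c))) * indicator {0..} (y / c) * f y \<partial>lborel)"
      using c by (subst nn_integral_real_affine[where c="1 / c" and t=0]) auto
    also have "\<dots> = (\<integral>\<^sup>+y. ennreal (exponential_density (1 / c) y) * f y \<partial>lborel)"
      using c
      by (subst nn_integral_cmult[symmetric], measurable)
         (auto intro!: nn_integral_cong simp: exponential_density_def zero_le_divide_iff mult.assoc[symmetric]
           simp flip: ennreal_mult split: split_indicator)
    also have "\<dots> = (\<integral>\<^sup>+x. f x \<partial>exp_mean c)"
      using c by (simp add: exp_mean_def nn_integral_density)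
    finally show "(\<integral>\<^sup>+x. f x \<partial>distr exp1 borel (\<lambda>x. pos_part c * x)) = (\<integral>\<^sup>+x. f x \<partial>exp_mean c)" .
  qed (use c in \<open>simp add: exp_mean_def\<close>)
qed

definition iid_exp1 :: "'v set \<Rightarrow> ('v \<Rightarrow> real) measure" where
  "iid_exp1 W = PiM W (\<lambda>_. exp1)"

definition scale_conf :: "'v set \<Rightarrow> ('v \<Rightarrow> real) \<Rightarrow> ('v \<Rightarrow> real) \<Rightarrow> ('v \<Rightarrow> real)" where
  "scale_conf W s e = (\<lambda>l\<in>W. pos_part (s l) * e l)"

lemma sets_iid_exp1[measurable_cong]: "sets (iid_exp1 W) = sets (stsp W)"
  unfolding iid_exp1_def stsp_def by (intro sets_PiM_cong) auto

lemma space_stsp: "space (stsp W) = (\<Pi>\<^sub>E i\<in>W. UNIV)"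
  by (simp add: stsp_def space_PiM)

lemma space_stsp_not_empty: "space (stsp W) \<noteq> {}"
  by (simp add: space_stsp PiE_eq_empty_iff)

lemma prob_space_iid_exp1: "finite W \<Longrightarrow> prob_space (iid_exp1 W)"
  unfolding iid_exp1_def by (intro prob_space_PiM exp1.prob_space_axioms)

lemma measurable_scale_conf[measurable]:
  "(\<lambda>(s, e). scale_conf W s e) \<in> measurable (stsp W \<Otimes>\<^sub>M stsp W) (stsp W)"
  unfolding scale_conf_def stsp_def by measurable

lemma measurable_scale_conf_iid_exp1[measurable]:
  "scale_conf W s \<in> measurable (iid_exp1 W) (stsp W)"
  unfolding scale_conf_def stsp_def iid_exp1_def by measurable

lemma scale_conf_in_space[simp]: "scale_conf W s e \<in> space (stsp W)"
  by (simp add: scale_conf_def space_stsp)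

lemma PiM_exp_mean_eq_distr:
  assumes W: "finite W"
  shows "PiM W (\<lambda>l. exp_mean (s l)) = distr (iid_exp1 W) (stsp W) (scale_conf W s)"
proof (rule product_sigma_finite.PiM_eqI[OF _ W, symmetric])
  show "product_sigma_finite (\<lambda>l. exp_mean (s l))"
    unfolding product_sigma_finite_def exp_mean_eq_distr_exp1
    by (auto intro!: prob_space_imp_sigma_finite exp1.prob_space_distr)
  show "sets (distr (iid_exp1 W) (stsp W) (scale_conf W s)) = sets (PiM W (\<lambda>l. exp_mean (s l)))"
    unfolding sets_distr stsp_def by (intro sets_PiM_cong) (simp_all add: exp_mean_eq_distr_exp1)
  fix A assume "\<And>i. i \<in> W \<Longrightarrow> A i \<in> sets (exp_mean (s i))"
  then have A[measurable]: "\<And>i. i \<in> W \<Longrightarrow> A i \<in> sets borel"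
    by (simp add: exp_mean_eq_distr_exp1)
  have "scale_conf W s -` Pi\<^sub>E W A \<inter> space (iid_exp1 W) = Pi\<^sub>E W (\<lambda>l. (\<lambda>x. pos_part (s l) * x) -` A l)"
    by (auto simp: scale_conf_def iid_exp1_def space_PiM PiE_iff)
  moreover have "Pi\<^sub>E W A \<in> sets (stsp W)"
    unfolding stsp_def using W by (intro sets_PiM_I_finite) auto
  ultimately have "emeasure (distr (iid_exp1 W) (stsp W) (scale_conf W s)) (Pi\<^sub>E W A)
      = emeasure (iid_exp1 W) (Pi\<^sub>E W (\<lambda>l. (\<lambda>x. pos_part (s l) * x) -` A l))"
    by (simp add: emeasure_distr)
  also have "\<dots> = (\<Prod>l\<in>W. emeasure exp1 ((\<lambda>x. pos_part (s l) * x) -` A l))"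
    unfolding iid_exp1_def
    by (rule product_sigma_finite.emeasure_PiM[OF _ W])
       (auto simp: product_sigma_finite_def exp1.sigma_finite_measure_axioms
         intro!: measurable_sets_borel[OF _ A])
  also have "\<dots> = (\<Prod>l\<in>W. emeasure (exp_mean (s l)) (A l))"
    by (intro prod.cong refl) (simp add: exp_mean_eq_distr_exp1 emeasure_distr)
  finally show "emeasure (distr (iid_exp1 W) (stsp W) (scale_conf W s)) (Pi\<^sub>E W A)
      = (\<Prod>l\<in>W. emeasure (exp_mean (s l)) (A l))" .
qed

lemma AE_iid_exp1_nonneg: "finite W \<Longrightarrow> AE e in iid_exp1 W. \<forall>i\<in>W. 0 \<le> e i"
  unfolding iid_exp1_def
  by (intro AE_finite_allI AE_PiM_component exp1.prob_space_axioms AE_exp1_nonneg)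

lemma measurable_scaled_law:
  assumes "finite W"
  shows "(\<lambda>s. distr (iid_exp1 W) (stsp W) (scale_conf W s)) \<in> measurable (stsp W) (subprob_algebra (stsp W))"
proof (rule measurable_distr2[where f="\<lambda>s e. scale_conf W s e"])
  show "(\<lambda>(s, e). scale_conf W s e) \<in> measurable (stsp W \<Otimes>\<^sub>M iid_exp1 W) (stsp W)"
    by measurable
  show "(\<lambda>_. iid_exp1 W) \<in> measurable (stsp W) (subprob_algebra (iid_exp1 W))"
    using prob_space_iid_exp1[OF assms]
    by (auto intro!: measurable_const prob_space_imp_subprob_space simp: space_subprob_algebra)
qed

lemma exp_mixture_eq_bind:
  "finite W \<Longrightarrow> exp_mixture W \<nu> = \<nu> \<bind> (\<lambda>s. distr (iid_exp1 W) (stsp W) (scale_conf W s))"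
  unfolding exp_mixture_def by (intro bind_cong refl PiM_exp_mean_eq_distr)

lemma nn_integral_exp_mixture:
  assumes W: "finite W" and \<nu>: "sets \<nu> = sets (stsp W)" and f: "f \<in> borel_measurable (stsp W)"
  shows "(\<integral>\<^sup>+z. f z \<partial>exp_mixture W \<nu>) = (\<integral>\<^sup>+s. \<integral>\<^sup>+e. f (scale_conf W s e) \<partial>iid_exp1 W \<partial>\<nu>)"
  unfolding exp_mixture_eq_bind[OF W]
  using measurable_scaled_law[OF W] f
  by (subst nn_integral_bind[OF f]) (auto intro!: nn_integral_cong nn_integral_distr cong: measurable_cong_sets simp: \<nu>)

lemma exp_mixture_in_subprob_algebra:
  assumes W: "finite W" and \<nu>: "\<nu> \<in> space (subprob_algebra (stsp W))"
  shows "exp_mixture W \<nu> \<in> space (subprob_algebra (stsp W))"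
proof -
  have "subprob_space \<nu>" "sets \<nu> = sets (stsp W)"
    using \<nu> by (auto simp: space_subprob_algebra)
  then show ?thesis
    unfolding exp_mixture_eq_bind[OF W] space_subprob_algebra
    using measurable_scaled_law[OF W] subprob_space.subprob_not_empty
    by (auto intro!: subprob_space_bind sets_bind cong: measurable_cong_sets)
qed

lemma sets_exp_mixture:
  assumes "finite W" "sets \<nu> = sets (stsp W)" "space \<nu> \<noteq> {}"
  shows "sets (exp_mixture W \<nu>) = sets (stsp W)"
  unfolding exp_mixture_eq_bind[OF assms(1)] by (rule sets_bind) (use assms in auto)

lemma prob_space_exp_mixture:
  assumes W: "finite W" and "sets \<nu> = sets (stsp W)" "prob_space \<nu>"
  shows "prob_space (exp_mixture W \<nu>)"
  unfolding exp_mixture_eq_bind[OF W] using assms measurable_scaled_law[OF W]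
  by (intro prob_space.prob_space_bind AE_I2 exp1.prob_space_distr prob_space.prob_space_distr
      prob_space_iid_exp1) (auto cong: measurable_cong_sets)

lemma exp_mixture_bind_pmf:
  assumes W: "finite W" and F: "\<And>x. F x \<in> space (subprob_algebra (stsp W))"
  shows "exp_mixture W (measure_pmf p \<bind> F) = measure_pmf p \<bind> (\<lambda>x. exp_mixture W (F x))"
  unfolding exp_mixture_eq_bind[OF W]
  by (rule bind_assoc[OF _ measurable_scaled_law[OF W]]) (use F in simp)

lemma nn_integral_exp1_power:
  assumes "0 \<le> c"
  shows "(\<integral>\<^sup>+x. ennreal ((c * x) ^ k) \<partial>exp1) = ennreal (fact k * c ^ k)"
proof -
  have "(\<integral>\<^sup>+x. ennreal ((c * x) ^ k) \<partial>exp1)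
      = (\<integral>\<^sup>+x. ennreal (c ^ k) * ennreal (erlang_density 0 1 x * x ^ k) \<partial>lborel)"
    using assms
    by (subst nn_integral_exp1, measurable)
       (auto intro!: nn_integral_cong simp: erlang_density_def power_mult_distrib mult_ac
         simp flip: ennreal_mult split: split_indicator)
  also have "\<dots> = ennreal (fact k * c ^ k)"
    using assms by (simp add: nn_integral_cmult nn_integral_erlang_ith_moment flip: ennreal_mult)
  finally show ?thesis .
qed

lemma nn_integral_exp_mixture_monomial:
  assumes W: "finite W" and \<nu>: "sets \<nu> = sets (stsp W)" and nonneg: "AE s in \<nu>. \<forall>i\<in>W. 0 \<le> s i"
  shows "(\<integral>\<^sup>+\<zeta>. ennreal (\<Prod>i\<in>W. \<zeta> i ^ k i) \<partial>exp_mixture W \<nu>)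
       = (\<integral>\<^sup>+s. ennreal (\<Prod>i\<in>W. fact (k i) * s i ^ k i) \<partial>\<nu>)"
proof -
  have [measurable]: "(\<lambda>\<zeta>. ennreal (\<Prod>i\<in>W. \<zeta> i ^ k i)) \<in> borel_measurable (stsp W)"
    unfolding stsp_def by (intro measurable_compose[OF _ measurable_ennreal] borel_measurable_prod) measurable
  have "(\<integral>\<^sup>+e. ennreal (\<Prod>i\<in>W. scale_conf W s e i ^ k i) \<partial>iid_exp1 W)
      = (\<Prod>i\<in>W. ennreal (fact (k i) * pos_part (s i) ^ k i))" for s
  proof -
    have "(\<integral>\<^sup>+e. ennreal (\<Prod>i\<in>W. scale_conf W s e i ^ k i) \<partial>iid_exp1 W)
        = (\<integral>\<^sup>+e. (\<Prod>i\<in>W. ennreal ((pos_part (s i) * e i) ^ k i)) \<partial>PiM W (\<lambda>_. exp1))"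
      unfolding iid_exp1_def[symmetric] using AE_iid_exp1_nonneg[OF W]
      by (intro nn_integral_cong_AE) (auto elim!: eventually_mono simp: scale_conf_def prod_ennreal pos_part_def)
    also have "\<dots> = (\<Prod>i\<in>W. \<integral>\<^sup>+x. ennreal ((pos_part (s i) * x) ^ k i) \<partial>exp1)"
      by (rule product_sigma_finite.product_nn_integral_prod[OF _ W])
         (simp_all add: product_sigma_finite_def exp1.sigma_finite_measure_axioms)
    finally show ?thesis
      by (simp add: nn_integral_exp1_power pos_part_def)
  qed
  then have "(\<integral>\<^sup>+\<zeta>. ennreal (\<Prod>i\<in>W. \<zeta> i ^ k i) \<partial>exp_mixture W \<nu>)
      = (\<integral>\<^sup>+s. (\<Prod>i\<in>W. ennreal (fact (k i) * pos_part (s i) ^ k i)) \<partial>\<nu>)"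
    by (simp add: nn_integral_exp_mixture[OF W \<nu>])
  also have "\<dots> = (\<integral>\<^sup>+s. ennreal (\<Prod>i\<in>W. fact (k i) * s i ^ k i) \<partial>\<nu>)"
    using nonneg by (intro nn_integral_cong_AE) (auto elim!: eventually_mono simp: prod_ennreal)
  finally show ?thesis .
qed

lemma nn_integral_iid_exp1_pair:
  assumes W: "finite W" and ij: "i \<in> W" "j \<in> W" "i \<noteq> j" and G: "G \<in> borel_measurable (stsp W)"
  shows "(\<integral>\<^sup>+e. G e \<partial>iid_exp1 W)
       = (\<integral>\<^sup>+e. \<integral>\<^sup>+x. \<integral>\<^sup>+y. G (e(i := x, j := y)) \<partial>exp1 \<partial>exp1 \<partial>iid_exp1 (W - {i, j}))"
proof -
  interpret product_sigma_finite "\<lambda>_. exp1"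
    by (simp add: product_sigma_finite_def exp1.sigma_finite_measure_axioms)
  define W' where "W' = W - {i, j}"
  have W_eq: "W = insert j (insert i W')" and "finite W'" "j \<notin> insert i W'" "i \<notin> W'"
    using W ij by (auto simp: W'_def)
  have [measurable]: "G \<in> borel_measurable (PiM (insert j (insert i W')) (\<lambda>_. exp1))"
    using G unfolding W_eq[symmetric] by (simp cong: measurable_cong_sets add: sets_iid_exp1[unfolded iid_exp1_def])
  have "(\<integral>\<^sup>+e. G e \<partial>iid_exp1 W) = (\<integral>\<^sup>+e. \<integral>\<^sup>+y. G (e(j := y)) \<partial>exp1 \<partial>PiM (insert i W') (\<lambda>_. exp1))"
    unfolding iid_exp1_def W_eq using \<open>finite W'\<close> \<open>j \<notin> insert i W'\<close>
    by (intro product_nn_integral_insert) auto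
  also have "\<dots> = (\<integral>\<^sup>+e. \<integral>\<^sup>+x. \<integral>\<^sup>+y. G (e(i := x, j := y)) \<partial>exp1 \<partial>exp1 \<partial>PiM W' (\<lambda>_. exp1))"
    using \<open>finite W'\<close> \<open>i \<notin> W'\<close> by (intro product_nn_integral_insert) measurable
  finally show ?thesis
    unfolding iid_exp1_def W'_def .
qed

lemma nn_integral_iid_exp1_pair_cong:
  assumes "finite W" "i \<in> W" "j \<in> W" "i \<noteq> j"
    and "F \<in> borel_measurable (stsp W)" "G \<in> borel_measurable (stsp W)"
    and "\<And>e. (\<integral>\<^sup>+x. \<integral>\<^sup>+y. F (e(i := x, j := y)) \<partial>exp1 \<partial>exp1) = (\<integral>\<^sup>+x. \<integral>\<^sup>+y. G (e(i := x, j := y)) \<partial>exp1 \<partial>exp1)"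
  shows "(\<integral>\<^sup>+e. F e \<partial>iid_exp1 W) = (\<integral>\<^sup>+e. G e \<partial>iid_exp1 W)"
  using assms by (simp add: nn_integral_iid_exp1_pair[of W i j])

lemma scale_conf_upd2:
  "i \<in> W \<Longrightarrow> j \<in> W \<Longrightarrow> i \<noteq> j \<Longrightarrow>
    scale_conf W s (e(i := x, j := y)) = (scale_conf W s e)(i := pos_part (s i) * x, j := pos_part (s j) * y)"
  by (auto simp: scale_conf_def fun_eq_iff)

section \<open>One update along an edge\<close>

definition kmp_bulk_map :: "'v \<Rightarrow> 'v \<Rightarrow> ('v \<Rightarrow> real) \<times> real \<Rightarrow> ('v \<Rightarrow> real)" where
  "kmp_bulk_map i j = (\<lambda>(\<zeta>, u). \<zeta>(i := u * (\<zeta> i + \<zeta> j), j := (1 - u) * (\<zeta> i + \<zeta> j)))"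

definition kmp_boundary_map ::
  "('v \<Rightarrow> real) \<Rightarrow> 'v \<Rightarrow> 'v \<Rightarrow> (('v \<Rightarrow> real) \<times> real) \<times> real \<Rightarrow> ('v \<Rightarrow> real)" where
  "kmp_boundary_map T i j = (\<lambda>((\<zeta>, u), b). \<zeta>(i := u * (\<zeta> i + \<zeta> j), j := b * T j))"

definition opinion_map :: "'v set \<Rightarrow> 'v \<Rightarrow> 'v \<Rightarrow> ('v \<Rightarrow> real) \<times> real \<Rightarrow> ('v \<Rightarrow> real)" where
  "opinion_map V i j = (\<lambda>(x, v). (\<lambda>l. if l \<in> {i, j} \<inter> V then v * x i + (1 - v) * x j else x l))"

lemma measurable_stsp_upd2:
  assumes "i \<in> W" "j \<in> W" and F: "F \<in> measurable M (stsp W)"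
    and [measurable]: "p \<in> borel_measurable M" "q \<in> borel_measurable M"
  shows "(\<lambda>x. (F x)(i := p x, j := q x)) \<in> measurable M (stsp W)"
proof -
  have [measurable]: "(\<lambda>x. F x l) \<in> borel_measurable M" if "l \<in> W" for l
    using F that unfolding stsp_def by measurable
  show ?thesis
    unfolding stsp_def
  proof (rule measurable_PiM_single')
    show "(\<lambda>x. ((F x)(i := p x, j := q x)) l) \<in> borel_measurable M" if "l \<in> W" for l
      using that by (cases "l = j"; cases "l = i") simp_all
    show "(\<lambda>x. (F x)(i := p x, j := q x)) \<in> space M \<rightarrow> (\<Pi>\<^sub>E l\<in>W. space borel)"
      using measurable_space[OF F] assms(1,2) by (auto simp: space_stsp PiE_def extensional_def)
  qed
qed

lemma measurable_kmp_bulk_map: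
  assumes "i \<in> W" "j \<in> W"
  shows "kmp_bulk_map i j \<in> measurable (stsp W \<Otimes>\<^sub>M borel) (stsp W)"
  unfolding kmp_bulk_map_def split_beta
  using assms unfolding stsp_def by (intro measurable_stsp_upd2[unfolded stsp_def]) measurable

lemma measurable_kmp_boundary_map:
  assumes "i \<in> W" "j \<in> W"
  shows "kmp_boundary_map T i j \<in> measurable ((stsp W \<Otimes>\<^sub>M borel) \<Otimes>\<^sub>M borel) (stsp W)"
  unfolding kmp_boundary_map_def split_beta
  using assms unfolding stsp_def by (intro measurable_stsp_upd2[unfolded stsp_def]) measurable

lemma opinion_map_eq_upd2:
  "i \<in> V \<Longrightarrow> opinion_map V i j (x, v)
     = x(i := v * x i + (1 - v) * x j, j := (if j \<in> V then v * x i + (1 - v) * x j else x j))"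
  by (auto simp: opinion_map_def fun_eq_iff)

lemma measurable_opinion_map:
  assumes "i \<in> V" "i \<in> W" "j \<in> W"
  shows "opinion_map V i j \<in> measurable (stsp W \<Otimes>\<^sub>M borel) (stsp W)"
proof -
  have "(\<lambda>(x, v). opinion_map V i j (x, v)) \<in> measurable (stsp W \<Otimes>\<^sub>M borel) (stsp W)"
    unfolding opinion_map_eq_upd2[OF assms(1)] split_beta
    using assms(2,3) unfolding stsp_def by (intro measurable_stsp_upd2[unfolded stsp_def]) measurable
  then show ?thesis
    by simp
qed

lemma scale_conf_opinion_map_upd2:
  assumes "i \<in> V" "i \<in> W" "j \<in> W" "i \<noteq> j"
  shows "scale_conf W (opinion_map V i j (s, v)) (e(i := x, j := y))
       = (scale_conf W s e)(i := pos_part (v * s i + (1 - v) * s j) * x,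
                            j := pos_part (if j \<in> V then v * s i + (1 - v) * s j else s j) * y)"
  using assms by (auto simp: scale_conf_def opinion_map_def fun_eq_iff)

lemma measurable_scale_conf_opinion_map[measurable]:
  "(\<lambda>(e, v). scale_conf W (opinion_map V i j (s, v)) e) \<in> measurable (stsp W \<Otimes>\<^sub>M borel) (stsp W)"
proof -
  have "(\<lambda>x. \<lambda>l\<in>W. pos_part (if l \<in> {i, j} \<inter> V then snd x * s i + (1 - snd x) * s j else s l) * fst x l)
      \<in> measurable (PiM W (\<lambda>_. borel) \<Otimes>\<^sub>M borel) (PiM W (\<lambda>_. borel))"
  proof (rule measurable_restrict)
    fix l assume "l \<in> W"
    then show "(\<lambda>x. pos_part (if l \<in> {i, j} \<inter> V then snd x * s i + (1 - snd x) * s j else s l) * fst x l)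
        \<in> borel_measurable (PiM W (\<lambda>_. borel) \<Otimes>\<^sub>M borel)"
      by (cases "l \<in> {i, j} \<inter> V") simp_all
  qed
  moreover have "(\<lambda>(e, v). scale_conf W (opinion_map V i j (s, v)) e)
      = (\<lambda>x. \<lambda>l\<in>W. pos_part (if l \<in> {i, j} \<inter> V then snd x * s i + (1 - snd x) * s j else s l) * fst x l)"
    by (auto simp: scale_conf_def opinion_map_def fun_eq_iff)
  ultimately show ?thesis
    by (simp add: stsp_def)
qed

lemma nn_integral_kmp_edge_step_bulk:
  assumes "j \<notin> B" "i \<in> V \<union> B" "j \<in> V \<union> B" and \<mu>: "sets \<mu> = sets (stsp (V \<union> B))"
    and f: "f \<in> borel_measurable (stsp (V \<union> B))"
  shows "(\<integral>\<^sup>+z. f z \<partial>kmp_edge_step V B T i j \<mu>) = (\<integral>\<^sup>+\<zeta>. \<integral>\<^sup>+u. f (kmp_bulk_map i j (\<zeta>, u)) \<partial>unif01 \<partial>\<mu>)"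
proof -
  note [measurable] = f measurable_kmp_bulk_map[OF assms(2,3)] and [measurable_cong] = \<mu>
  have "kmp_edge_step V B T i j \<mu> = distr (\<mu> \<Otimes>\<^sub>M unif01) (stsp (V \<union> B)) (kmp_bulk_map i j)"
    using assms(1) by (simp add: kmp_edge_step_def kmp_bulk_map_def)
  then show ?thesis
    by (simp add: nn_integral_distr) (rule unif01.nn_integral_fst[symmetric], measurable)
qed

lemma nn_integral_kmp_edge_step_boundary:
  assumes "j \<in> B" "i \<in> V \<union> B" and \<mu>: "sets \<mu> = sets (stsp (V \<union> B))"
    and f: "f \<in> borel_measurable (stsp (V \<union> B))"
  shows "(\<integral>\<^sup>+z. f z \<partial>kmp_edge_step V B T i j \<mu>)
       = (\<integral>\<^sup>+\<zeta>. \<integral>\<^sup>+u. \<integral>\<^sup>+b. f (kmp_boundary_map T i j ((\<zeta>, u), b)) \<partial>exp1 \<partial>unif01 \<partial>\<mu>)"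
proof -
  have "j \<in> V \<union> B"
    using assms(1) by simp
  note [measurable] = f measurable_kmp_boundary_map[OF assms(2) this] and [measurable_cong] = \<mu>
  have "kmp_edge_step V B T i j \<mu> = distr ((\<mu> \<Otimes>\<^sub>M unif01) \<Otimes>\<^sub>M exp1) (stsp (V \<union> B)) (kmp_boundary_map T i j)"
    using assms(1) by (simp add: kmp_edge_step_def kmp_boundary_map_def)
  then show ?thesis
    by (simp add: nn_integral_distr exp1.nn_integral_fst[symmetric])
       (rule unif01.nn_integral_fst[symmetric], measurable)
qed

lemma nn_integral_op_edge_step:
  assumes "i \<in> V" "j \<in> V \<union> B" and \<nu>: "sets \<nu> = sets (stsp (V \<union> B))"
    and f: "f \<in> borel_measurable (stsp (V \<union> B))"
  shows "(\<integral>\<^sup>+z. f z \<partial>op_edge_step V B i j \<nu>) = (\<integral>\<^sup>+s. \<integral>\<^sup>+v. f (opinion_map V i j (s, v)) \<partial>unif01 \<partial>\<nu>)"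
proof -
  have "i \<in> V \<union> B"
    using assms(1) by simp
  note [measurable] = f measurable_opinion_map[OF assms(1) this assms(2)] and [measurable_cong] = \<nu>
  have "op_edge_step V B i j \<nu> = distr (\<nu> \<Otimes>\<^sub>M unif01) (stsp (V \<union> B)) (opinion_map V i j)"
    by (simp add: op_edge_step_def opinion_map_def)
  then show ?thesis
    by (simp add: nn_integral_distr) (rule unif01.nn_integral_fst[symmetric], measurable)
qed

lemma kmp_bulk_update_scale_conf:
  assumes W: "finite W" and ij: "i \<in> V" "j \<in> V" "V \<subseteq> W" "i \<noteq> j" and s: "0 \<le> s i" "0 \<le> s j"
    and f[measurable]: "f \<in> borel_measurable (stsp W)"
  shows "(\<integral>\<^sup>+e. \<integral>\<^sup>+u. f (kmp_bulk_map i j (scale_conf W s e, u)) \<partial>unif01 \<partial>iid_exp1 W)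
       = (\<integral>\<^sup>+e. \<integral>\<^sup>+v. f (scale_conf W (opinion_map V i j (s, v)) e) \<partial>unif01 \<partial>iid_exp1 W)"
proof -
  have iW: "i \<in> W" "j \<in> W"
    using ij by auto
  note [measurable] = measurable_kmp_bulk_map[OF iW]
  show ?thesis
  proof (rule nn_integral_iid_exp1_pair_cong[OF W iW ij(4)])
    fix e
    define h where "h p q = f ((scale_conf W s e)(i := p, j := q))" for p q
    have "case_prod h \<in> borel_measurable (borel \<Otimes>\<^sub>M borel)"
      unfolding h_def split_beta' using iW by (intro measurable_compose[OF _ f] measurable_stsp_upd2) auto
    then show "(\<integral>\<^sup>+x. \<integral>\<^sup>+y. \<integral>\<^sup>+u. f (kmp_bulk_map i j (scale_conf W s (e(i := x, j := y)), u)) \<partial>unif01 \<partial>exp1 \<partial>exp1)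
        = (\<integral>\<^sup>+x. \<integral>\<^sup>+y. \<integral>\<^sup>+v. f (scale_conf W (opinion_map V i j (s, v)) (e(i := x, j := y))) \<partial>unif01 \<partial>exp1 \<partial>exp1)"
      unfolding scale_conf_opinion_map_upd2[OF ij(1) iW ij(4)]
      using kmp_bulk_update_exp1[of h "s i" "s j"] s iW ij
      by (simp add: h_def kmp_bulk_map_def scale_conf_upd2)
  qed measurable
qed

lemma kmp_boundary_update_scale_conf:
  assumes W: "finite W" and ij: "i \<in> V" "j \<in> W" "j \<notin> V" "V \<subseteq> W"
    and s: "0 \<le> s i" "s j = T j" and T: "0 < T j"
    and f[measurable]: "f \<in> borel_measurable (stsp W)"
  shows "(\<integral>\<^sup>+e. \<integral>\<^sup>+u. \<integral>\<^sup>+b. f (kmp_boundary_map T i j ((scale_conf W s e, u), b)) \<partial>exp1 \<partial>unif01 \<partial>iid_exp1 W)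
       = (\<integral>\<^sup>+e. \<integral>\<^sup>+v. f (scale_conf W (opinion_map V i j (s, v)) e) \<partial>unif01 \<partial>iid_exp1 W)"
proof -
  have iW: "i \<in> W" "j \<in> W" "i \<noteq> j"
    using ij by auto
  note [measurable] = measurable_kmp_boundary_map[OF iW(1,2)]
  show ?thesis
  proof (rule nn_integral_iid_exp1_pair_cong[OF W iW])
    fix e
    define h where "h p q = f ((scale_conf W s e)(i := p, j := q))" for p q
    have "case_prod h \<in> borel_measurable (borel \<Otimes>\<^sub>M borel)"
      unfolding h_def split_beta' using iW by (intro measurable_compose[OF _ f] measurable_stsp_upd2) auto
    then show "(\<integral>\<^sup>+x. \<integral>\<^sup>+y. \<integral>\<^sup>+u. \<integral>\<^sup>+b. f (kmp_boundary_map T i j ((scale_conf W s (e(i := x, j := y)), u), b))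
          \<partial>exp1 \<partial>unif01 \<partial>exp1 \<partial>exp1)
        = (\<integral>\<^sup>+x. \<integral>\<^sup>+y. \<integral>\<^sup>+v. f (scale_conf W (opinion_map V i j (s, v)) (e(i := x, j := y))) \<partial>unif01 \<partial>exp1 \<partial>exp1)"
      unfolding scale_conf_opinion_map_upd2[OF ij(1) iW]
      using kmp_boundary_update_exp1[of h "s i" "T j"] s T iW ij
      by (simp add: h_def kmp_boundary_map_def scale_conf_upd2)
  qed measurable
qed

section \<open>The KMP and opinion semigroups\<close>

definition admissible_conf :: "'v set \<Rightarrow> 'v set \<Rightarrow> ('v \<Rightarrow> real) \<Rightarrow> ('v \<Rightarrow> real) \<Rightarrow> bool" where
  "admissible_conf V B T x \<longleftrightarrow> (\<forall>i\<in>V. 0 \<le> x i) \<and> (\<forall>j\<in>B. x j = T j)"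

lemma admissible_param_iff:
  "admissible_param V B T \<nu> \<longleftrightarrow>
     prob_space \<nu> \<and> sets \<nu> = sets (stsp (V \<union> B)) \<and> (AE s in \<nu>. admissible_conf V B T s)"
  by (simp add: admissible_param_def admissible_conf_def)

lemma pred_admissible_conf[measurable]:
  assumes "finite V" "finite B"
  shows "Measurable.pred (stsp (V \<union> B)) (admissible_conf V B T)"
proof -
  have [measurable]: "(\<lambda>x. x l) \<in> borel_measurable (stsp (V \<union> B))" if "l \<in> V \<union> B" for l
    using that unfolding stsp_def by measurable
  show ?thesis
    unfolding admissible_conf_def using assms by measurable
qed

lemma admissible_param_imp_subprob:
  "admissible_param V B T \<nu> \<Longrightarrow> \<nu> \<in> space (subprob_algebra (stsp (V \<union> B)))"
  by (auto simp: admissible_param_def space_subprob_algebra intro: prob_space_imp_subprob_space)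

lemma admissible_param_bind_pmf:
  assumes "finite V" "finite B"
    and F: "\<And>x. F x \<in> space (subprob_algebra (stsp (V \<union> B)))"
    and adm: "\<And>x. x \<in> set_pmf p \<Longrightarrow> admissible_param V B T (F x)"
  shows "admissible_param V B T (measure_pmf p \<bind> F)"
proof -
  have F_meas: "F \<in> measurable (measure_pmf p) (subprob_algebra (stsp (V \<union> B)))"
    using F by simp
  have "prob_space (measure_pmf p \<bind> F)"
    using adm by (intro prob_space.prob_space_bind[OF prob_space_measure_pmf _ F_meas] AE_pmfI)
      (auto simp: admissible_param_def)
  moreover have "sets (measure_pmf p \<bind> F) = sets (stsp (V \<union> B))"
    using F by (intro sets_bind) (auto simp: space_subprob_algebra)
  moreover have "AE s in measure_pmf p \<bind> F. admissible_conf V B T s"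
    using adm assms(1,2)
    by (subst AE_bind[OF F_meas]) (auto intro!: AE_pmfI simp: admissible_param_iff)
  ultimately show ?thesis
    by (simp add: admissible_param_iff)
qed

(* Stated without measurability of f because bind_measure_pmf_cong needs the edge kernels at
   every pair (i, j), not only at edges; for a non-measurable f, distr gives the null measure. *)

lemma distr_in_subprob_algebra:
  assumes M: "subprob_space M" and N: "space N \<noteq> {}"
  shows "distr M N f \<in> space (subprob_algebra N)"
proof -
  have "emeasure (distr M N f) (space N) \<le> 1"
    using emeasure_space[of M "f -` space N \<inter> space M"] subprob_space.emeasure_space_le_1[OF M]
    unfolding distr_def emeasure_measure_of_conv by (auto intro: order_trans)
  then show ?thesis
    using N by (auto intro!: subprob_spaceI simp: space_subprob_algebra)
qed

lemma kmp_edge_step_in_subprob_algebra: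
  "prob_space \<mu> \<Longrightarrow> kmp_edge_step V B T i j \<mu> \<in> space (subprob_algebra (stsp (V \<union> B)))"
  unfolding kmp_edge_step_def
  by (auto intro!: distr_in_subprob_algebra prob_space_imp_subprob_space prob_space_pair
      unif01.prob_space_axioms exp1.prob_space_axioms space_stsp_not_empty)

lemma op_edge_step_in_subprob_algebra:
  "prob_space \<nu> \<Longrightarrow> op_edge_step V B i j \<nu> \<in> space (subprob_algebra (stsp (V \<union> B)))"
  unfolding op_edge_step_def
  by (auto intro!: distr_in_subprob_algebra prob_space_imp_subprob_space prob_space_pair
      unif01.prob_space_axioms space_stsp_not_empty)

locale kmp_graph =
  fixes V B :: "'v set" and Eb :: "('v \<times> 'v) set" and T :: "'v \<Rightarrow> real"
  assumes finite_V: "finite V" and finite_B: "finite B" and disjoint: "V \<inter> B = {}"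
    and edges: "Eb \<subseteq> V \<times> (V \<union> B)"
    and oriented: "\<And>i j. (i, j) \<in> Eb \<Longrightarrow> (j, i) \<notin> Eb"
    and T_pos: "\<And>j. j \<in> B \<Longrightarrow> 0 < T j"
begin

lemma finite_W: "finite (V \<union> B)"
  using finite_V finite_B by simp

lemma finite_Eb: "finite Eb"
  using edges finite_W by (rule finite_subset[OF _ finite_cartesian_product[OF finite_V]])

lemma edgeD:
  assumes "(i, j) \<in> Eb"
  shows "i \<in> V" "j \<in> V \<union> B" "i \<noteq> j"
  using assms edges oriented[OF assms] by auto

lemma admissible_conf_nonneg: "admissible_conf V B T s \<Longrightarrow> l \<in> V \<union> B \<Longrightarrow> 0 \<le> s l"
  using T_pos[of l] by (fastforce simp: admissible_conf_def)

lemma admissible_param_AE_nonneg: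
  "admissible_param V B T \<nu> \<Longrightarrow> AE s in \<nu>. \<forall>l\<in>V \<union> B. 0 \<le> s l"
  by (auto simp: admissible_param_iff elim!: eventually_mono intro: admissible_conf_nonneg)

lemma nn_integral_exp_mixture_op_edge_step:
  assumes e: "(i, j) \<in> Eb" and \<nu>: "sets \<nu> = sets (stsp (V \<union> B))"
    and f[measurable]: "f \<in> borel_measurable (stsp (V \<union> B))"
  shows "(\<integral>\<^sup>+z. f z \<partial>exp_mixture (V \<union> B) (op_edge_step V B i j \<nu>))
       = (\<integral>\<^sup>+s. \<integral>\<^sup>+e. \<integral>\<^sup>+v. f (scale_conf (V \<union> B) (opinion_map V i j (s, v)) e) \<partial>unif01 \<partial>iid_exp1 (V \<union> B) \<partial>\<nu>)"
proof -
  interpret iid: prob_space "iid_exp1 (V \<union> B)"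
    by (rule prob_space_iid_exp1[OF finite_W])
  note [measurable_cong] = \<nu>
  have "(\<integral>\<^sup>+z. f z \<partial>exp_mixture (V \<union> B) (op_edge_step V B i j \<nu>))
      = (\<integral>\<^sup>+s. \<integral>\<^sup>+e. f (scale_conf (V \<union> B) s e) \<partial>iid_exp1 (V \<union> B) \<partial>op_edge_step V B i j \<nu>)"
    by (rule nn_integral_exp_mixture[OF finite_W _ f]) (simp add: op_edge_step_def)
  also have "\<dots> = (\<integral>\<^sup>+s. \<integral>\<^sup>+v. \<integral>\<^sup>+e. f (scale_conf (V \<union> B) (opinion_map V i j (s, v)) e)
      \<partial>iid_exp1 (V \<union> B) \<partial>unif01 \<partial>\<nu>)"
    using edgeD[OF e] by (intro nn_integral_op_edge_step \<nu>) measurable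
  also have "\<dots> = (\<integral>\<^sup>+s. \<integral>\<^sup>+e. \<integral>\<^sup>+v. f (scale_conf (V \<union> B) (opinion_map V i j (s, v)) e)
      \<partial>unif01 \<partial>iid_exp1 (V \<union> B) \<partial>\<nu>)"
  proof (rule nn_integral_cong)
    interpret pair_prob_space "iid_exp1 (V \<union> B)" unif01 ..
    show "(\<integral>\<^sup>+v. \<integral>\<^sup>+e. f (scale_conf (V \<union> B) (opinion_map V i j (s, v)) e) \<partial>iid_exp1 (V \<union> B) \<partial>unif01)
        = (\<integral>\<^sup>+e. \<integral>\<^sup>+v. f (scale_conf (V \<union> B) (opinion_map V i j (s, v)) e) \<partial>unif01 \<partial>iid_exp1 (V \<union> B))" for s
      by (rule Fubini') measurable
  qed
  finally show ?thesis .
qed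

lemma nn_integral_kmp_edge_step_exp_mixture:
  assumes e: "(i, j) \<in> Eb" and \<nu>: "admissible_param V B T \<nu>"
    and f[measurable]: "f \<in> borel_measurable (stsp (V \<union> B))"
  shows "(\<integral>\<^sup>+z. f z \<partial>kmp_edge_step V B T i j (exp_mixture (V \<union> B) \<nu>))
       = (\<integral>\<^sup>+s. \<integral>\<^sup>+e. \<integral>\<^sup>+v. f (scale_conf (V \<union> B) (opinion_map V i j (s, v)) e) \<partial>unif01 \<partial>iid_exp1 (V \<union> B) \<partial>\<nu>)"
proof -
  note ij = edgeD[OF e]
  have sets_\<nu>[measurable_cong]: "sets \<nu> = sets (stsp (V \<union> B))" and "prob_space \<nu>"
    and adm: "AE s in \<nu>. admissible_conf V B T s"
    using \<nu> by (auto simp: admissible_param_iff)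
  have sets_mix: "sets (exp_mixture (V \<union> B) \<nu>) = sets (stsp (V \<union> B))"
    using \<open>prob_space \<nu>\<close> by (intro sets_exp_mixture[OF finite_W sets_\<nu>] prob_space.not_empty)
  show ?thesis
  proof (cases "j \<in> B")
    case True
    note [measurable] = measurable_kmp_boundary_map[of i "V \<union> B" j T]
    have "(\<integral>\<^sup>+z. f z \<partial>kmp_edge_step V B T i j (exp_mixture (V \<union> B) \<nu>))
        = (\<integral>\<^sup>+s. \<integral>\<^sup>+e. \<integral>\<^sup>+u. \<integral>\<^sup>+b. f (kmp_boundary_map T i j ((scale_conf (V \<union> B) s e, u), b))
            \<partial>exp1 \<partial>unif01 \<partial>iid_exp1 (V \<union> B) \<partial>\<nu>)"
      using True ij
      by (simp add: nn_integral_kmp_edge_step_boundary[OF True _ sets_mix] nn_integral_exp_mixture[OF finite_W sets_\<nu>])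
    also have "\<dots> = (\<integral>\<^sup>+s. \<integral>\<^sup>+e. \<integral>\<^sup>+v. f (scale_conf (V \<union> B) (opinion_map V i j (s, v)) e)
        \<partial>unif01 \<partial>iid_exp1 (V \<union> B) \<partial>\<nu>)"
      using adm
    proof (intro nn_integral_cong_AE, eventually_elim)
      case (elim s)
      then show ?case
        using True ij disjoint T_pos
        by (intro kmp_boundary_update_scale_conf[OF finite_W]) (auto simp: admissible_conf_def)
    qed
    finally show ?thesis .
  next
    case False
    note [measurable] = measurable_kmp_bulk_map[of i "V \<union> B" j]
    have "(\<integral>\<^sup>+z. f z \<partial>kmp_edge_step V B T i j (exp_mixture (V \<union> B) \<nu>))
        = (\<integral>\<^sup>+s. \<integral>\<^sup>+e. \<integral>\<^sup>+u. f (kmp_bulk_map i j (scale_conf (V \<union> B) s e, u))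
            \<partial>unif01 \<partial>iid_exp1 (V \<union> B) \<partial>\<nu>)"
      using False ij
      by (simp add: nn_integral_kmp_edge_step_bulk[OF False _ _ sets_mix] nn_integral_exp_mixture[OF finite_W sets_\<nu>])
    also have "\<dots> = (\<integral>\<^sup>+s. \<integral>\<^sup>+e. \<integral>\<^sup>+v. f (scale_conf (V \<union> B) (opinion_map V i j (s, v)) e)
        \<partial>unif01 \<partial>iid_exp1 (V \<union> B) \<partial>\<nu>)"
      using adm
    proof (intro nn_integral_cong_AE, eventually_elim)
      case (elim s)
      then show ?case
        using False ij admissible_conf_nonneg[OF \<open>admissible_conf V B T s\<close>]
        by (intro kmp_bulk_update_scale_conf[OF finite_W]) auto
    qed
    finally show ?thesis .
  qed
qed

lemma kmp_edge_step_exp_mixture: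
  assumes e: "(i, j) \<in> Eb" and \<nu>: "admissible_param V B T \<nu>"
  shows "kmp_edge_step V B T i j (exp_mixture (V \<union> B) \<nu>) = exp_mixture (V \<union> B) (op_edge_step V B i j \<nu>)"
proof (rule measure_eqI_nn_integral)
  have sets_\<nu>: "sets \<nu> = sets (stsp (V \<union> B))"
    using \<nu> by (simp add: admissible_param_def)
  have sets_op: "sets (exp_mixture (V \<union> B) (op_edge_step V B i j \<nu>)) = sets (stsp (V \<union> B))"
    by (intro sets_exp_mixture[OF finite_W]) (simp_all add: op_edge_step_def space_stsp_not_empty)
  then show "sets (kmp_edge_step V B T i j (exp_mixture (V \<union> B) \<nu>))
      = sets (exp_mixture (V \<union> B) (op_edge_step V B i j \<nu>))"
    by (simp add: kmp_edge_step_def)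
  fix f :: "('v \<Rightarrow> real) \<Rightarrow> ennreal"
  assume "f \<in> borel_measurable (exp_mixture (V \<union> B) (op_edge_step V B i j \<nu>))"
  then have "f \<in> borel_measurable (stsp (V \<union> B))"
    using sets_op by (simp cong: measurable_cong_sets)
  then show "(\<integral>\<^sup>+z. f z \<partial>kmp_edge_step V B T i j (exp_mixture (V \<union> B) \<nu>))
      = (\<integral>\<^sup>+z. f z \<partial>exp_mixture (V \<union> B) (op_edge_step V B i j \<nu>))"
    by (simp add: nn_integral_kmp_edge_step_exp_mixture[OF e \<nu>]
        nn_integral_exp_mixture_op_edge_step[OF e sets_\<nu>])
qed

lemma op_edge_step_admissible:
  assumes e: "(i, j) \<in> Eb" and \<nu>: "admissible_param V B T \<nu>"
  shows "admissible_param V B T (op_edge_step V B i j \<nu>)"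
proof -
  note ij = edgeD[OF e]
  have sets_\<nu>[measurable_cong]: "sets \<nu> = sets (stsp (V \<union> B))" and "prob_space \<nu>"
    and adm: "AE s in \<nu>. admissible_conf V B T s"
    using \<nu> by (auto simp: admissible_param_iff)
  have op: "op_edge_step V B i j \<nu> = distr (\<nu> \<Otimes>\<^sub>M unif01) (stsp (V \<union> B)) (opinion_map V i j)"
    by (simp add: op_edge_step_def opinion_map_def)
  have [measurable]: "opinion_map V i j \<in> measurable (stsp (V \<union> B) \<Otimes>\<^sub>M borel) (stsp (V \<union> B))"
    using ij by (intro measurable_opinion_map) auto
  note [measurable] = pred_admissible_conf[OF finite_V finite_B]
  interpret pair_prob_space \<nu> unif01
    by (simp add: pair_prob_space_def pair_sigma_finite_def \<open>prob_space \<nu>\<close> prob_space_imp_sigma_finite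
        unif01.prob_space_axioms unif01.sigma_finite_measure_axioms)
  have "AE p in \<nu> \<Otimes>\<^sub>M unif01. admissible_conf V B T (opinion_map V i j p)"
  proof (rule AE_pair_measure)
    show "AE s in \<nu>. AE v in unif01. admissible_conf V B T (opinion_map V i j (s, v))"
      using adm
    proof eventually_elim
      case (elim s)
      have "0 \<le> s i" "0 \<le> s j"
        using ij admissible_conf_nonneg[OF elim] by auto
      show ?case
        using AE_unif01 by eventually_elim
          (use elim disjoint \<open>0 \<le> s i\<close> \<open>0 \<le> s j\<close> in \<open>auto simp: admissible_conf_def opinion_map_def\<close>)
    qed
  qed measurable
  then have "AE x in op_edge_step V B i j \<nu>. admissible_conf V B T x"
    unfolding op by (subst AE_distr_iff) measurable
  moreover have "prob_space (op_edge_step V B i j \<nu>)"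
    unfolding op by (rule prob_space_distr) measurable
  ultimately show ?thesis
    by (simp add: admissible_param_iff) (simp add: op)
qed

lemma op_step_admissible:
  assumes "Eb \<noteq> {}" and \<nu>: "admissible_param V B T \<nu>"
  shows "admissible_param V B T (op_step V B Eb \<nu>)"
  unfolding op_step_def
proof (rule admissible_param_bind_pmf[OF finite_V finite_B])
  show "(case x of (i, j) \<Rightarrow> op_edge_step V B i j \<nu>) \<in> space (subprob_algebra (stsp (V \<union> B)))" for x
    using \<nu> by (auto simp: admissible_param_def split: prod.split intro!: op_edge_step_in_subprob_algebra)
  show "admissible_param V B T (case x of (i, j) \<Rightarrow> op_edge_step V B i j \<nu>)" if "x \<in> set_pmf (pmf_of_set Eb)" for x
    using that assms finite_Eb by (auto split: prod.split intro!: op_edge_step_admissible)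
qed

lemma kmp_step_exp_mixture:
  assumes "Eb \<noteq> {}" and \<nu>: "admissible_param V B T \<nu>"
  shows "kmp_step V B Eb T (exp_mixture (V \<union> B) \<nu>) = exp_mixture (V \<union> B) (op_step V B Eb \<nu>)"
proof -
  have "prob_space \<nu>" "sets \<nu> = sets (stsp (V \<union> B))"
    using \<nu> by (auto simp: admissible_param_def)
  then have op_in: "(case x of (i, j) \<Rightarrow> op_edge_step V B i j \<nu>) \<in> space (subprob_algebra (stsp (V \<union> B)))" for x
    by (auto split: prod.split intro!: op_edge_step_in_subprob_algebra)
  have "kmp_step V B Eb T (exp_mixture (V \<union> B) \<nu>)
      = measure_pmf (pmf_of_set Eb) \<bind> (\<lambda>x. exp_mixture (V \<union> B) (case x of (i, j) \<Rightarrow> op_edge_step V B i j \<nu>))"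
    unfolding kmp_step_def
  proof (rule bind_measure_pmf_cong)
    show "(case x of (i, j) \<Rightarrow> kmp_edge_step V B T i j (exp_mixture (V \<union> B) \<nu>))
        \<in> space (subprob_algebra (stsp (V \<union> B)))" for x
      using \<open>prob_space \<nu>\<close> \<open>sets \<nu> = _\<close>
      by (auto split: prod.split intro!: kmp_edge_step_in_subprob_algebra prob_space_exp_mixture finite_W)
    show "exp_mixture (V \<union> B) (case x of (i, j) \<Rightarrow> op_edge_step V B i j \<nu>) \<in> space (subprob_algebra (stsp (V \<union> B)))" for x
      by (rule exp_mixture_in_subprob_algebra[OF finite_W op_in])
    show "(case x of (i, j) \<Rightarrow> kmp_edge_step V B T i j (exp_mixture (V \<union> B) \<nu>))
        = exp_mixture (V \<union> B) (case x of (i, j) \<Rightarrow> op_edge_step V B i j \<nu>)" if "x \<in> set_pmf (pmf_of_set Eb)" for x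
      using that assms finite_Eb by (auto split: prod.split intro!: kmp_edge_step_exp_mixture)
  qed
  also have "\<dots> = exp_mixture (V \<union> B) (op_step V B Eb \<nu>)"
    unfolding op_step_def by (rule exp_mixture_bind_pmf[OF finite_W op_in, symmetric])
  finally show ?thesis .
qed

lemma funpow_kmp_step_exp_mixture:
  assumes "Eb \<noteq> {}" and \<nu>: "admissible_param V B T \<nu>"
  shows "admissible_param V B T ((op_step V B Eb ^^ n) \<nu>)
    \<and> (kmp_step V B Eb T ^^ n) (exp_mixture (V \<union> B) \<nu>) = exp_mixture (V \<union> B) ((op_step V B Eb ^^ n) \<nu>)"
  by (induction n) (simp_all add: \<nu> op_step_admissible kmp_step_exp_mixture assms(1))

lemma kmp_law_exp_mixture:
  assumes "0 \<le> t" and \<nu>: "admissible_param V B T \<nu>"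
  shows "admissible_param V B T (op_law V B Eb t \<nu>)
    \<and> kmp_law V B Eb T t (exp_mixture (V \<union> B) \<nu>) = exp_mixture (V \<union> B) (op_law V B Eb t \<nu>)"
proof (cases "real (card Eb) * t \<le> 0")
  case True
  then show ?thesis
    using \<nu> by (simp add: kmp_law_def op_law_def unif_sg_def)
next
  case False
  then have "Eb \<noteq> {}"
    by auto
  note iter = funpow_kmp_step_exp_mixture[OF this \<nu>]
  define P where "P = measure_pmf (poisson_pmf (real (card Eb) * t))"
  have in_subprob: "(op_step V B Eb ^^ n) \<nu> \<in> space (subprob_algebra (stsp (V \<union> B)))" for n
    using iter admissible_param_imp_subprob by blast
  have "kmp_law V B Eb T t (exp_mixture (V \<union> B) \<nu>) = P \<bind> (\<lambda>n. exp_mixture (V \<union> B) ((op_step V B Eb ^^ n) \<nu>))"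
    using False iter by (simp add: kmp_law_def unif_sg_def P_def)
  also have "\<dots> = exp_mixture (V \<union> B) (op_law V B Eb t \<nu>)"
    using False unfolding P_def
    by (simp add: op_law_def unif_sg_def exp_mixture_bind_pmf[OF finite_W in_subprob])
  finally show ?thesis
    using False iter
    by (simp add: op_law_def unif_sg_def admissible_param_bind_pmf[OF finite_V finite_B in_subprob])
qed

end

theorem theorem2p6:
  fixes V B :: "'v set" and Eb :: "('v \<times> 'v) set" and T :: "'v \<Rightarrow> real"
    and \<nu> :: "('v \<Rightarrow> real) measure"
  assumes finV: "finite V" and finB: "finite B" and disj: "V \<inter> B = {}"
    and edges: "Eb \<subseteq> V \<times> (V \<union> B)"
    and orient: "\<And>i j. (i, j) \<in> Eb \<Longrightarrow> (j, i) \<notin> Eb"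
    and Tpos: "\<And>j. j \<in> B \<Longrightarrow> 0 < T j"
    and nu: "admissible_param V B T \<nu>"
  shows
    "(\<forall>t\<ge>0. kmp_law V B Eb T t (exp_mixture (V \<union> B) \<nu>)
              = exp_mixture (V \<union> B) (op_law V B Eb t \<nu>))
     \<and> (\<forall>\<nu>O. (admissible_param V B T \<nu>O \<and> (\<forall>t\<ge>0. op_law V B Eb t \<nu>O = \<nu>O)
              \<and> (\<forall>\<nu>'. admissible_param V B T \<nu>' \<and> (\<forall>t\<ge>0. op_law V B Eb t \<nu>' = \<nu>') \<longrightarrow> \<nu>' = \<nu>O))
           \<longrightarrow> (\<forall>t\<ge>0. kmp_law V B Eb T t (exp_mixture (V \<union> B) \<nu>O) = exp_mixture (V \<union> B) \<nu>O)
               \<and> (\<forall>k :: 'v \<Rightarrow> nat.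
                    (\<integral>\<^sup>+ \<zeta>. ennreal (\<Prod>i\<in>V \<union> B. \<zeta> i ^ k i) \<partial>exp_mixture (V \<union> B) \<nu>O)
                    = (\<integral>\<^sup>+ s. ennreal (\<Prod>i\<in>V \<union> B. fact (k i) * s i ^ k i) \<partial>\<nu>O)))
     \<and> (\<forall>t\<ge>0. \<forall>k :: 'v \<Rightarrow> nat.
          (\<integral>\<^sup>+ \<zeta>. ennreal (\<Prod>i\<in>V \<union> B. \<zeta> i ^ k i) \<partial>kmp_law V B Eb T t (exp_mixture (V \<union> B) \<nu>))
          = (\<integral>\<^sup>+ s. ennreal (\<Prod>i\<in>V \<union> B. fact (k i) * s i ^ k i) \<partial>op_law V B Eb t \<nu>))"
proof -
  interpret kmp_graph V B Eb T
    using assms by unfold_locales auto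
  have moments: "(\<integral>\<^sup>+\<zeta>. ennreal (\<Prod>i\<in>V \<union> B. \<zeta> i ^ k i) \<partial>exp_mixture (V \<union> B) \<mu>)
      = (\<integral>\<^sup>+s. ennreal (\<Prod>i\<in>V \<union> B. fact (k i) * s i ^ k i) \<partial>\<mu>)"
    if "admissible_param V B T \<mu>" for \<mu> k
    using that by (intro nn_integral_exp_mixture_monomial[OF finite_W] admissible_param_AE_nonneg)
      (simp add: admissible_param_def)
  show ?thesis
    using kmp_law_exp_mixture[OF _ nu] kmp_law_exp_mixture moments by auto
qed

end
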